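(* Let $K$ be a $p$-adic field and let $f(x)\in K[x_1,\ldots,x_n]$ be a (non-constant) form of degree $d$. Then, as an identity of meromorphic functions of $s\in\mathbb{C}$, \[ \left\langle |f|_K^{s},\Phi\right\rangle=\left(\frac{1-q^{ds}}{1-q^{-n}}\right)Z(s,f)\left\langle \mathcal{R}_{ds+n},\Phi\right\rangle \] for every $\Phi\in\Delta(K^n)$.
   Context: $K$ is a finite extension of $\mathbb{Q}_p$ with valuation ring $R_K$, maximal ideal $P_K$, residue field of cardinality $q$; $|\cdot|_K$ is the normalized absolute value and $\|x\|_K=\max_i|x_i|_K$ for $x\in K^n$. $|dx|$ is the Haar measure on $K^n$ with $\mathrm{vol}(R_K^n)=1$. For $\Phi$ a Schwartz–Bruhat function (locally constant with compact support), $\langle |f|_K^s,\Phi\rangle=\int_{K^n\setminus f^{-1}(0)}\Phi(x)|f(x)|_K^s|dx|$ for $\mathrm{Re}(s)>0$, extended meromorphically to $\mathbb{C}$ (Igusa); $Z(s,f)=\int_{R_K^n}|f(x)|_K^s|dx|$ for $\mathrm{Re}(s)>0$ and its meromorphic continuation. The $p$-adic Gamma function is $\Gamma_n(\alpha)=\frac{1-q^{\alpha-n}}{1-q^{-\alpha}}$. The Riesz kernel $\mathcal{R}_\alpha$ is the distribution given for $\mathrm{Re}(\alpha)>0$, $\alpha\notin n+\frac{2\pi i}{\log q}\mathbb{Z}$, by the function $\|x\|_K^{\alpha-n}/\Gamma_n(\alpha)$, meromorphically continued to $\mathbb{C}$ by $\langle\mathcal{R}_\alpha,\Phi\rangle=\Phi(0)\frac{1-q^{-n}}{1-q^{\alpha-n}}+\frac{1-q^{-\alpha}}{1-q^{\alpha-n}}\int_{\|x\|_K\le1}(\Phi(x)-\Phi(0))\|x\|_K^{\alpha-n}|dx|+\frac{1-q^{-\alpha}}{1-q^{\alpha-n}}\int_{\|x\|_K>1}\Phi(x)\|x\|_K^{\alpha-n}|dx|$.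 For $l\in\mathbb{Z}$, $\Omega_l$ is the characteristic function of the ball $(P_K^l)^n$; $\Delta(K^n)$ is the $\mathbb{C}$-vector space spanned by all $\Omega_l$, $l\in\mathbb{Z}$. *)

theory Defs
  imports "HOL-Analysis.Analysis"
begin

section \<open>The p-adic field K, given by its normalized absolute value\<close>

definition valring :: "('k::field_char_0 \<Rightarrow> real) \<Rightarrow> 'k set" where
  "valring absK = {x. absK x \<le> 1}"

definition maxideal :: "('k::field_char_0 \<Rightarrow> real) \<Rightarrow> 'k set" where
  "maxideal absK = {x. absK x < 1}"

definition residue_card :: "('k::field_char_0 \<Rightarrow> real) \<Rightarrow> nat" where
  "residue_card absK = card (valring absK //
      {(x, y). x \<in> valring absK \<and> y \<in> valring absK \<and> x - y \<in> maxideal absK})"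

text \<open>Topological closure of the prime field Q in K (a copy of Q_p).\<close>
definition rat_closure :: "('k::field_char_0 \<Rightarrow> real) \<Rightarrow> 'k set" where
  "rat_closure absK = {x. \<forall>e>0. \<exists>r::rat. absK (x - of_rat r) < e}"

text \<open>K is a finite extension of Q_p and absK is its normalized absolute value:
  absK is a complete non-archimedean absolute value, p-adic on Q for some prime p,
  K is finite dimensional over the closure of Q (which is Q_p), and the value group
  is q^Z with q the cardinality of the residue field.\<close>
definition p_adic_field :: "('k::field_char_0 \<Rightarrow> real) \<Rightarrow> bool" where
  "p_adic_field absK \<longleftrightarrow>
     (\<forall>x. absK x = 0 \<longleftrightarrow> x = 0) \<and>
     (\<forall>x y. absK (x * y) = absK x * absK y) \<and>
     (\<forall>x y. absK (x + y) \<le> max (absK x) (absK y)) \<and>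
     (\<forall>X::nat \<Rightarrow> 'k. (\<forall>e>0. \<exists>N. \<forall>m\<ge>N. \<forall>k\<ge>N. absK (X m - X k) < e) \<longrightarrow>
          (\<exists>L. \<forall>e>0. \<exists>N. \<forall>m\<ge>N. absK (X m - L) < e)) \<and>
     (\<exists>p::nat. prime p \<and> absK (of_nat p) < 1) \<and>
     (\<exists>B. finite B \<and> (\<forall>x. \<exists>a. (\<forall>b\<in>B. a b \<in> rat_closure absK) \<and> x = (\<Sum>b\<in>B. a b * b))) \<and>
     1 < residue_card absK \<and>
     absK ` (UNIV - {0}) = {real (residue_card absK) powi k | k. True}"

definition normK :: "('k::field_char_0 \<Rightarrow> real) \<Rightarrow> 'k ^ 'n \<Rightarrow> real" where
  "normK absK x = Max (range (\<lambda>i. absK (x $ i)))"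

text \<open>Haar measure on K^n (Borel sets = sigma algebra generated by the balls),
  translation invariant, normalized by vol(R_K^n) = 1.\<close>
definition haar_measure :: "('k::field_char_0 \<Rightarrow> real) \<Rightarrow> ('k ^ 'n) measure \<Rightarrow> bool" where
  "haar_measure absK M \<longleftrightarrow>
     space M = UNIV \<and>
     sets M = sigma_sets UNIV {{x. normK absK (x - a) \<le> r} | a r. True} \<and>
     (\<forall>a. \<forall>A\<in>sets M. emeasure M ((\<lambda>x. a + x) ` A) = emeasure M A) \<and>
     emeasure M {x. normK absK x \<le> 1} = 1"

text \<open>A form of degree d in the variables x_i (i in 'n) with coefficients in K, given by
  its finitely supported coefficient function on exponent vectors; non-constant
  (d >= 1) and nonzero.\<close>
definition hom_form :: "nat \<Rightarrow> (('n::finite \<Rightarrow> nat) \<Rightarrow> 'k::field_char_0) \<Rightarrow> bool" where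
  "hom_form d c \<longleftrightarrow> 1 \<le> d \<and> finite {a. c a \<noteq> 0} \<and> {a. c a \<noteq> 0} \<noteq> {} \<and>
     (\<forall>a. c a \<noteq> 0 \<longrightarrow> (\<Sum>i\<in>UNIV. a i) = d)"

definition form_eval :: "(('n::finite \<Rightarrow> nat) \<Rightarrow> 'k::field_char_0) \<Rightarrow> 'k ^ 'n \<Rightarrow> 'k" where
  "form_eval c x = (\<Sum>a\<in>{a. c a \<noteq> 0}. c a * (\<Prod>i\<in>UNIV. (x $ i) ^ a i))"

definition qpow :: "('k::field_char_0 \<Rightarrow> real) \<Rightarrow> complex \<Rightarrow> complex" where
  "qpow absK z = of_nat (residue_card absK) powr z"

text \<open>Omega_l: characteristic function of (P_K^l)^n = {x. ||x|| \<le> q^-l}.\<close>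
definition Omega :: "('k::field_char_0 \<Rightarrow> real) \<Rightarrow> int \<Rightarrow> 'k ^ 'n \<Rightarrow> complex" where
  "Omega absK l x = (if normK absK x \<le> real (residue_card absK) powi (- l) then 1 else 0)"

definition Delta_space :: "('k::field_char_0 \<Rightarrow> real) \<Rightarrow> ('k ^ 'n \<Rightarrow> complex) set" where
  "Delta_space absK = {\<Phi>. \<exists>L c. finite L \<and> \<Phi> = (\<lambda>x. \<Sum>l\<in>L. c l * Omega absK l x)}"

definition igusa_pairing :: "('k::field_char_0 \<Rightarrow> real) \<Rightarrow> ('k ^ 'n) measure \<Rightarrow>
    ('k ^ 'n \<Rightarrow> 'k) \<Rightarrow> complex \<Rightarrow> ('k ^ 'n \<Rightarrow> complex) \<Rightarrow> complex" where
  "igusa_pairing absK M f s \<Phi> =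
     (LINT x : {x. f x \<noteq> 0} | M. \<Phi> x * complex_of_real (absK (f x)) powr s)"

definition igusa_zeta :: "('k::field_char_0 \<Rightarrow> real) \<Rightarrow> ('k ^ 'n) measure \<Rightarrow>
    ('k ^ 'n \<Rightarrow> 'k) \<Rightarrow> complex \<Rightarrow> complex" where
  "igusa_zeta absK M f s =
     (LINT x : {x. normK absK x \<le> 1} | M. complex_of_real (absK (f x)) powr s)"

text \<open>The Riesz kernel R_alpha paired with Phi, via the explicit formula of the context
  (which is its meromorphic continuation; for Re alpha > 0 it agrees with the integral of
  ||x||^(alpha-n)/Gamma_n(alpha)).\<close>
definition riesz :: "('k::field_char_0 \<Rightarrow> real) \<Rightarrow> ('k ^ 'n::finite) measure \<Rightarrow>
    complex \<Rightarrow> ('k ^ 'n \<Rightarrow> complex) \<Rightarrow> complex" where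
  "riesz absK M \<alpha> \<Phi> =
     (let n = of_nat CARD('n) in
       \<Phi> 0 * (1 - qpow absK (- n)) / (1 - qpow absK (\<alpha> - n))
     + (1 - qpow absK (- \<alpha>)) / (1 - qpow absK (\<alpha> - n)) *
         (LINT x : {x. normK absK x \<le> 1} | M.
             (\<Phi> x - \<Phi> 0) * complex_of_real (normK absK x) powr (\<alpha> - n))
     + (1 - qpow absK (- \<alpha>)) / (1 - qpow absK (\<alpha> - n)) *
         (LINT x : {x. normK absK x > 1} | M.
             \<Phi> x * complex_of_real (normK absK x) powr (\<alpha> - n)))"

end

theory Submission
  imports Defs
begin

text \<open>
  Every \<Phi> in \<Delta>(K^n) is a finite combination of the \<Omega>_l, so it suffices to compare how both
  sides behave on \<Omega>_l. Substituting x = e y with |e| = q^-l multiplies Haar integrals by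
  q^(-l n), and |f(e y)|^s = q^(-l d s) |f(y)|^s because f is a form of degree d; hence the
  pairing of |f|^s with \<Omega>_l is q^(-l \<alpha>) Z(s,f) with \<alpha> = d s + n. The Riesz kernel scales
  in the same way: the pairing of R_\<alpha> with \<Omega>_l is q^(-l \<alpha>) (1 - q^-n) / (1 - q^(\<alpha> - n)),
  where the constant comes from splitting the unit ball into the sphere |x| = 1, on which
  |x|^(\<alpha>-n) = 1, and the ball of radius 1/q, which is the unit ball scaled by q^-1.
  Comparing the two scalings gives the identity. Haar measure is determined on balls by
  cutting a ball of radius q^(j+1) into q^n disjoint balls of radius q^j, one for each
  vector of residues modulo P_K.
\<close>

lemma card_vec_entries_in:
  assumes "finite T"
  shows "finite {v :: 'a ^ 'n::finite. \<forall>i. v $ i \<in> T}"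
    and "card {v :: 'a ^ 'n. \<forall>i. v $ i \<in> T} = card T ^ CARD('n)"
proof -
  let ?V = "{v :: 'a ^ 'n. \<forall>i. v $ i \<in> T}"
  have bij: "bij_betw vec_nth ?V (PiE UNIV (\<lambda>_. T))"
    unfolding bij_betw_def
  proof
    show "inj_on vec_nth ?V" by (simp add: inj_on_def vec_nth_inject)
    show "vec_nth ` ?V = PiE UNIV (\<lambda>_. T)"
    proof (intro set_eqI iffI)
      fix f :: "'n \<Rightarrow> 'a" assume "f \<in> PiE UNIV (\<lambda>_. T)"
      then have "f = vec_nth (vec_lambda f)" "vec_lambda f \<in> ?V" by (auto simp: PiE_iff)
      then show "f \<in> vec_nth ` ?V" by blast
    qed (auto simp: PiE_iff)
  qed
  show "finite ?V" using bij_betw_finite[OF bij] assms by (simp add: finite_PiE)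
  show "card ?V = card T ^ CARD('n)" using bij_betw_same_card[OF bij] by (simp add: card_PiE)
qed

lemma equiv_class_representatives:
  fixes A :: "'a set"
  assumes "equiv A r"
  obtains T where "T \<subseteq> A" "bij_betw (\<lambda>t. r `` {t}) T (A // r)"
proof
  define rep where "rep X = (SOME x. x \<in> X)" for X :: "'a set"
  have rep: "rep X \<in> A" "r `` {rep X} = X" if X: "X \<in> A // r" for X
  proof -
    obtain a where "a \<in> A" "X = r `` {a}" using X by (auto elim: quotientE)
    then have "rep X \<in> X" unfolding rep_def using assms by (metis equiv_class_self someI_ex)
    then show "rep X \<in> A" "r `` {rep X} = X"
      using \<open>a \<in> A\<close> \<open>X = r `` {a}\<close> assms by (auto simp: equiv_class_eq_iff)
  qed
  show "rep ` (A // r) \<subseteq> A" using rep(1) by blast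
  show "bij_betw (\<lambda>t. r `` {t}) (rep ` (A // r)) (A // r)"
    by (rule bij_betw_byWitness[where f' = rep]) (use rep in auto)
qed

lemma of_real_powr_eq_exp: "0 < r \<Longrightarrow> complex_of_real r powr z = exp (z * of_real (ln r))"
  by (simp add: powr_def Ln_of_real)

lemma of_real_power_powr:
  assumes "0 < r"
  shows "complex_of_real (r ^ d) powr s = complex_of_real r powr (of_nat d * s)"
proof -
  have "complex_of_real (r ^ d) powr s = exp (s * of_real (ln (r ^ d)))"
    using assms by (intro of_real_powr_eq_exp) simp
  also have "\<dots> = complex_of_real r powr (of_nat d * s)"
    unfolding of_real_powr_eq_exp[OF assms] using assms by (simp add: ln_realpow mult_ac)
  finally show ?thesis .
qed

lemma norm_of_real_powr_le:
  "0 \<le> r \<Longrightarrow> r \<le> R \<Longrightarrow> 0 \<le> Re z \<Longrightarrow> norm (complex_of_real r powr z) \<le> R powr Re z"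
  by (simp add: norm_powr_real_powr powr_mono2)

section \<open>The absolute value of K, the norm on K^n and balls\<close>

locale p_adic_absval =
  fixes absK :: "'k::field_char_0 \<Rightarrow> real"
  assumes p_adic_field: "p_adic_field absK"
begin

abbreviation q :: real where "q \<equiv> real (residue_card absK)"

lemma q_gt_1: "1 < q"
  using p_adic_field unfolding p_adic_field_def by auto

lemma q_pos: "0 < q"
  using q_gt_1 by simp

lemma absK_eq_0_iff [simp]: "absK x = 0 \<longleftrightarrow> x = 0"
  and absK_mult: "absK (x * y) = absK x * absK y"
  and absK_ultrametric: "absK (x + y) \<le> max (absK x) (absK y)"
  using p_adic_field unfolding p_adic_field_def by auto

lemma absK_0 [simp]: "absK 0 = 0"
  by simp

lemma absK_value_group: "x \<noteq> 0 \<Longrightarrow> \<exists>k. absK x = q powi k"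
proof -
  assume "x \<noteq> 0"
  then have "absK x \<in> absK ` (UNIV - {0})" by auto
  then show ?thesis using p_adic_field unfolding p_adic_field_def by auto
qed

lemma absK_surj: "\<exists>x. absK x = q powi k"
proof -
  have "q powi k \<in> absK ` (UNIV - {0})" using p_adic_field unfolding p_adic_field_def by auto
  then show ?thesis by auto
qed

lemma absK_pos: "x \<noteq> 0 \<Longrightarrow> 0 < absK x"
  using absK_value_group q_pos by fastforce

lemma absK_nonneg [simp]: "0 \<le> absK x"
  by (cases "x = 0") (auto dest: absK_pos)

lemma absK_1 [simp]: "absK 1 = 1"
  using absK_mult[of 1 1] absK_pos[of 1] by simp

lemma absK_minus [simp]: "absK (- x) = absK x"
proof -
  have "absK (- 1) ^ 2 = 1" using absK_mult[of "- 1" "- 1"] by (simp add: power2_eq_square)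
  then have "absK (- 1) = 1" using absK_nonneg[of "- 1"] by (auto simp: power2_eq_1_iff)
  then show ?thesis using absK_mult[of "- 1" x] by simp
qed

lemma absK_minus_commute: "absK (x - y) = absK (y - x)"
  by (metis absK_minus minus_diff_eq)

lemma absK_inverse: "absK (inverse x) = inverse (absK x)"
proof (cases "x = 0")
  case False
  then have "absK x * absK (inverse x) = 1" using absK_mult[of x "inverse x"] by simp
  then show ?thesis by (metis inverse_unique)
qed simp

lemma absK_power: "absK (x ^ k) = absK x ^ k"
  by (induct k) (auto simp: absK_mult)

lemma absK_add_eq_of_less: "absK x < absK y \<Longrightarrow> absK (x + y) = absK y"
  using absK_ultrametric[of x y] absK_ultrametric[of "x + y" "- x"] by auto

lemma absK_sum_le:
  "(\<And>b. b \<in> S \<Longrightarrow> absK (g b) \<le> C) \<Longrightarrow> 0 \<le> C \<Longrightarrow> absK (sum g S) \<le> C"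
proof (induct S rule: infinite_finite_induct)
  case (insert a F)
  then have "absK (g a) \<le> C" "absK (sum g F) \<le> C" by simp_all
  then show ?case using absK_ultrametric[of "g a" "sum g F"] insert.hyps by simp
qed simp_all

lemma q_powi_le_iff: "q powi k \<le> q powi l \<longleftrightarrow> k \<le> l"
  using q_gt_1 by (meson not_le power_int_increasing power_int_strict_increasing zero_le_one order_less_imp_le)

lemma q_powi_less_iff: "q powi k < q powi l \<longleftrightarrow> k < l"
  using q_powi_le_iff by (meson not_le)

lemma absK_less_1_le: "absK x < 1 \<Longrightarrow> absK x \<le> inverse q"
proof (cases "x = 0")
  case False
  assume x: "absK x < 1"
  obtain k where k: "absK x = q powi k" using absK_value_group False by blast
  then have "k < 0" using x q_powi_less_iff[of k 0] by simp
  then have "absK x \<le> q powi (- 1)" using k q_powi_le_iff[of k "- 1"] by simp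
  then show ?thesis by (simp add: power_int_minus)
qed (simp add: q_pos less_imp_le)

lemma exists_q_powi_bracket: "0 < r \<Longrightarrow> \<exists>k. q powi k \<le> r \<and> r < q powi (k + 1)"
proof -
  assume r: "0 < r"
  define k where "k = \<lfloor>log q r\<rfloor>"
  have powi_powr: "q powi m = q powr of_int m" for m
    using q_pos by (simp add: powr_real_of_int')
  have "q powr of_int k \<le> q powr log q r" "q powr log q r < q powr of_int (k + 1)"
    using q_gt_1 unfolding k_def by simp_all
  then show ?thesis using r q_gt_1 unfolding powi_powr by auto
qed

lemma absK_nth_le_normK: "absK (x $ i) \<le> normK absK x"
  unfolding normK_def by (rule Max_ge) auto

lemma normK_le_iff: "normK absK x \<le> C \<longleftrightarrow> (\<forall>i. absK (x $ i) \<le> C)"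
  unfolding normK_def by (subst Max_le_iff) auto

lemma normK_attained: "\<exists>i. normK absK x = absK (x $ i)"
proof -
  have "normK absK x \<in> range (\<lambda>i. absK (x $ i))" unfolding normK_def by (rule Max_in) auto
  then show ?thesis by auto
qed

lemma normK_nonneg [simp]: "0 \<le> normK absK x"
  using absK_nth_le_normK[of x undefined] absK_nonneg[of "x $ undefined"] by linarith

lemma normK_eq_0_iff [simp]: "normK absK x = 0 \<longleftrightarrow> x = 0"
proof
  assume "normK absK x = 0"
  then have "absK (x $ i) \<le> 0" for i using normK_le_iff[of x 0] by simp
  then show "x = 0" by (metis absK_pos not_le vec_eq_iff zero_index)
qed (use normK_attained[of 0] in auto)

lemma normK_0 [simp]: "normK absK 0 = 0"
  by simp

lemma normK_ultrametric: "normK absK (x + y) \<le> max (normK absK x) (normK absK y)"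
  unfolding normK_le_iff
proof
  fix i
  have "absK ((x + y) $ i) \<le> max (absK (x $ i)) (absK (y $ i))" using absK_ultrametric by simp
  also have "\<dots> \<le> max (normK absK x) (normK absK y)"
    using absK_nth_le_normK[of x i] absK_nth_le_normK[of y i] by auto
  finally show "absK ((x + y) $ i) \<le> max (normK absK x) (normK absK y)" .
qed

lemma normK_minus [simp]: "normK absK (- x) = normK absK x"
  unfolding normK_def by simp

lemma normK_minus_commute: "normK absK (x - y) = normK absK (y - x)"
  by (metis normK_minus minus_diff_eq)

lemma normK_add_eq_of_less: "normK absK x < normK absK y \<Longrightarrow> normK absK (x + y) = normK absK y"
  using normK_ultrametric[of x y] normK_ultrametric[of "x + y" "- x"] by auto

lemma normK_smult: "normK absK (e *s x) = absK e * normK absK x"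
proof -
  obtain i where i: "normK absK x = absK (x $ i)" using normK_attained by blast
  obtain j where j: "normK absK (e *s x) = absK e * absK (x $ j)"
    using normK_attained[of "e *s x"] by (auto simp: absK_mult)
  have "normK absK (e *s x) \<le> absK e * normK absK x"
    using j absK_nth_le_normK[of x j] by (simp add: mult_left_mono)
  moreover have "absK e * normK absK x \<le> normK absK (e *s x)"
    using i absK_nth_le_normK[of "e *s x" i] by (simp add: absK_mult)
  ultimately show ?thesis by linarith
qed

lemma normK_value_group: "x \<noteq> 0 \<Longrightarrow> \<exists>k. normK absK x = q powi k"
  using normK_attained[of x] absK_value_group by (metis absK_0 normK_eq_0_iff)

definition kball :: "'k ^ 'n \<Rightarrow> real \<Rightarrow> ('k ^ 'n) set" where
  "kball a r = {x. normK absK (x - a) \<le> r}"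

lemma mem_kball: "x \<in> kball a r \<longleftrightarrow> (\<forall>i. absK (x $ i - a $ i) \<le> r)"
  unfolding kball_def by (simp add: normK_le_iff)

lemma kball_eq_kball: "normK absK (b - a) \<le> r \<Longrightarrow> kball a r = kball b r"
proof (intro set_eqI iffI)
  fix x
  assume "normK absK (b - a) \<le> r"
  then show "x \<in> kball a r \<Longrightarrow> x \<in> kball b r" "x \<in> kball b r \<Longrightarrow> x \<in> kball a r"
    using normK_ultrametric[of "x - a" "a - b"] normK_ultrametric[of "x - b" "b - a"]
      normK_minus_commute[of b a] by (auto simp: kball_def)
qed

lemma kball_subset_kball: "r \<le> r' \<Longrightarrow> kball a r \<subseteq> kball a r'"
  unfolding kball_def by auto

lemma kball_Int_cases:
  "kball a r \<inter> kball b r' \<in> {{}, kball a r, kball b r'}"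
proof (cases "kball a r \<inter> kball b r' = {}")
  case False
  then obtain c where "normK absK (c - a) \<le> r" "normK absK (c - b) \<le> r'"
    by (auto simp: kball_def)
  then have "kball a r = kball c r" "kball b r' = kball c r'" by (auto intro!: kball_eq_kball)
  then show ?thesis using kball_subset_kball[of r r' c] kball_subset_kball[of r' r c]
    by (cases "r \<le> r'") auto
qed simp

lemma kball_translate: "kball a r = (\<lambda>x. a + x) ` kball 0 r"
  unfolding kball_def by (auto simp: image_iff intro!: exI[of _ "x - a" for x])

lemma kball_empty: "r < 0 \<Longrightarrow> kball a r = {}"
  unfolding kball_def by (auto dest: order_trans[OF normK_nonneg])

lemma kball_0: "kball a 0 = {a}"
proof -
  have "normK absK (x - a) \<le> 0 \<longleftrightarrow> normK absK (x - a) = 0" for x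
    using normK_nonneg[of "x - a"] by linarith
  then show ?thesis unfolding kball_def by auto
qed

lemma kball_eq_kball_q_powi: "q powi k \<le> r \<Longrightarrow> r < q powi (k + 1) \<Longrightarrow> kball a r = kball a (q powi k)"
proof -
  assume k: "q powi k \<le> r" "r < q powi (k + 1)"
  have "normK absK y \<le> q powi k" if "normK absK y \<le> r" for y :: "'k ^ 'n"
  proof (cases "y = 0")
    case False
    then obtain m where m: "normK absK y = q powi m" using normK_value_group by blast
    then have "m < k + 1" using k that q_powi_less_iff[of m "k + 1"] by simp
    then show ?thesis using m q_powi_le_iff[of m k] by simp
  qed (use k q_pos in simp)
  then show ?thesis using k unfolding kball_def by force
qed

lemma equiv_residue_relation:
  "equiv (valring absK) {(x, y). x \<in> valring absK \<and> y \<in> valring absK \<and> x - y \<in> maxideal absK}"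
proof (rule equivI)
  show "refl_on (valring absK) {(x, y). x \<in> valring absK \<and> y \<in> valring absK \<and> x - y \<in> maxideal absK}"
    by (auto simp: refl_on_def maxideal_def)
  show "sym {(x, y). x \<in> valring absK \<and> y \<in> valring absK \<and> x - y \<in> maxideal absK}"
    using absK_minus_commute by (auto simp: sym_def maxideal_def)
  show "trans {(x, y). x \<in> valring absK \<and> y \<in> valring absK \<and> x - y \<in> maxideal absK}"
  proof (rule transI, clarsimp)
    fix x y z assume "x - y \<in> maxideal absK" "y - z \<in> maxideal absK"
    then show "x - z \<in> maxideal absK"
      using absK_ultrametric[of "x - y" "y - z"] by (simp add: maxideal_def)
  qed
qed auto

lemma residue_representatives:
  obtains T where "finite T" "card T = residue_card absK" "\<And>t. t \<in> T \<Longrightarrow> absK t \<le> 1"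
    "\<And>x. absK x \<le> 1 \<Longrightarrow> \<exists>t\<in>T. absK (x - t) < 1"
    "\<And>t t'. t \<in> T \<Longrightarrow> t' \<in> T \<Longrightarrow> absK (t - t') < 1 \<Longrightarrow> t = t'"
proof -
  define R where "R = valring absK"
  define rel where "rel = {(x, y). x \<in> R \<and> y \<in> R \<and> x - y \<in> maxideal absK}"
  have rel_iff: "(x, y) \<in> rel \<longleftrightarrow> absK x \<le> 1 \<and> absK y \<le> 1 \<and> absK (x - y) < 1" for x y
    unfolding rel_def R_def valring_def maxideal_def by auto
  have equiv: "equiv R rel"
    unfolding R_def rel_def by (rule equiv_residue_relation)
  obtain T where T: "T \<subseteq> R" "bij_betw (\<lambda>t. rel `` {t}) T (R // rel)"
    using equiv_class_representatives[OF equiv] by blast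
  have card_T: "card T = residue_card absK"
    using bij_betw_same_card[OF T(2)] unfolding residue_card_def R_def rel_def by simp
  show thesis
  proof (rule that)
    show "finite T" using card_T q_gt_1 card.infinite by fastforce
    show "card T = residue_card absK" by (fact card_T)
    show "absK t \<le> 1" if "t \<in> T" for t
      using that T(1) unfolding R_def valring_def by auto
    show "\<exists>t\<in>T. absK (x - t) < 1" if "absK x \<le> 1" for x
    proof -
      have "x \<in> R" using that by (simp add: R_def valring_def)
      then have "rel `` {x} \<in> (\<lambda>t. rel `` {t}) ` T"
        using T(2) by (simp add: bij_betw_def quotientI)
      then obtain t where "t \<in> T" "rel `` {x} = rel `` {t}" by blast
      then have "(x, t) \<in> rel" using eq_equiv_class_iff[OF equiv \<open>x \<in> R\<close>] T(1) by blast
      then show ?thesis using \<open>t \<in> T\<close> rel_iff by blast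
    qed
    show "t = t'" if "t \<in> T" "t' \<in> T" "absK (t - t') < 1" for t t'
    proof -
      have "(t, t') \<in> rel" using that T(1) unfolding rel_iff R_def valring_def by auto
      then have "rel `` {t} = rel `` {t'}" by (rule equiv_class_eq[OF equiv])
      then show ?thesis using inj_onD[OF bij_betw_imp_inj_on[OF T(2)]] that(1,2) by blast
    qed
  qed
qed

lemma kball_1_eq_Union:
  assumes "\<And>t. t \<in> T \<Longrightarrow> absK t \<le> 1" and "\<And>x. absK x \<le> 1 \<Longrightarrow> \<exists>t\<in>T. absK (x - t) < 1"
  shows "kball 0 1 = (\<Union>v\<in>{v :: 'k ^ 'n. \<forall>i. v $ i \<in> T}. kball v (inverse q))"
proof (intro set_eqI iffI)
  fix x :: "'k ^ 'n"
  assume "x \<in> kball 0 1"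
  then have "\<forall>i. \<exists>t\<in>T. absK (x $ i - t) < 1" using assms(2) by (simp add: mem_kball)
  then obtain t where "\<And>i. t i \<in> T" "\<And>i. absK (x $ i - t i) < 1" by metis
  then show "x \<in> (\<Union>v\<in>{v. \<forall>i. v $ i \<in> T}. kball v (inverse q))"
    by (intro UN_I[of "vec_lambda t"]) (auto simp: mem_kball absK_less_1_le)
next
  fix x :: "'k ^ 'n"
  assume "x \<in> (\<Union>v\<in>{v. \<forall>i. v $ i \<in> T}. kball v (inverse q))"
  then obtain v where v: "\<And>i. v $ i \<in> T" "x \<in> kball v (inverse q)" by blast
  have "absK (x $ i) \<le> 1" for i
  proof -
    have "absK (x $ i - v $ i) \<le> 1"
      using v(2) q_gt_1 unfolding mem_kball by (meson inverse_le_1_iff less_imp_le order_trans)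
    then show ?thesis
      using absK_ultrametric[of "x $ i - v $ i" "v $ i"] assms(1)[OF v(1)[of i]] by (simp add: max_def split: if_splits)
  qed
  then show "x \<in> kball 0 1" by (simp add: mem_kball)
qed

lemma disjoint_family_on_kball_inverse_q:
  assumes "\<And>t t'. t \<in> T \<Longrightarrow> t' \<in> T \<Longrightarrow> absK (t - t') < 1 \<Longrightarrow> t = t'"
  shows "disjoint_family_on (\<lambda>v. kball v (inverse q)) {v :: 'k ^ 'n. \<forall>i. v $ i \<in> T}"
  unfolding disjoint_family_on_def
proof (intro ballI impI equals0I)
  fix v w x :: "'k ^ 'n"
  assume "v \<in> {v. \<forall>i. v $ i \<in> T}" "w \<in> {v. \<forall>i. v $ i \<in> T}" "v \<noteq> w"
    and "x \<in> kball v (inverse q) \<inter> kball w (inverse q)"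
  then have vw: "\<And>i. v $ i \<in> T" "\<And>i. w $ i \<in> T" "v \<noteq> w"
    and x: "\<And>i. absK (v $ i - x $ i) \<le> inverse q" "\<And>i. absK (x $ i - w $ i) \<le> inverse q"
    using absK_minus_commute by (auto simp: mem_kball)
  have "absK (v $ i - w $ i) < 1" for i
  proof -
    have "absK (v $ i - w $ i) \<le> inverse q"
      using absK_ultrametric[of "v $ i - x $ i" "x $ i - w $ i"] x[of i] by simp
    also have "\<dots> < 1" using q_gt_1 by (simp add: inverse_less_1_iff)
    finally show ?thesis .
  qed
  then show False using assms vw by (metis vec_eq_iff)
qed

lemma vimage_smult_kball:
  assumes "e \<noteq> 0"
  shows "(\<lambda>y. e *s y) -` kball b r = kball (inverse e *s b) (r / absK e)"
proof -
  have "e *s y - b = e *s (y - inverse e *s b)" for y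
    using assms by (simp add: vec_eq_iff algebra_simps)
  then have "normK absK (e *s y - b) = absK e * normK absK (y - inverse e *s b)" for y
    by (simp only: normK_smult)
  then show ?thesis
    using absK_pos[OF assms] unfolding kball_def by (auto simp: pos_le_divide_eq mult.commute)
qed

lemma image_smult_kball:
  assumes "a \<noteq> 0"
  shows "(\<lambda>x. a *s x) ` kball c r = kball (a *s c) (absK a * r)"
proof -
  have "(\<lambda>x. a *s x) ` kball c r = (\<lambda>y. inverse a *s y) -` kball c r"
    using assms by (force simp: image_iff)
  then show ?thesis
    using assms vimage_smult_kball[of "inverse a" c r] by (simp add: absK_inverse divide_inverse mult.commute)
qed

lemma kball_decomposition:
  obtains C :: "('k ^ 'n) set" where "finite C" "card C = residue_card absK ^ CARD('n)"
    "kball 0 (q powi (j + 1)) = (\<Union>c\<in>C. kball c (q powi j))"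
    "disjoint_family_on (\<lambda>c. kball c (q powi j)) C"
proof -
  obtain T where T: "finite T" "card T = residue_card absK" "\<And>t. t \<in> T \<Longrightarrow> absK t \<le> 1"
    "\<And>x. absK x \<le> 1 \<Longrightarrow> \<exists>t\<in>T. absK (x - t) < 1"
    "\<And>t t'. t \<in> T \<Longrightarrow> t' \<in> T \<Longrightarrow> absK (t - t') < 1 \<Longrightarrow> t = t'"
    using residue_representatives by blast
  define Tn where "Tn = {v :: 'k ^ 'n. \<forall>i. v $ i \<in> T}"
  obtain a where a: "absK a = q powi (j + 1)" using absK_surj by blast
  then have "a \<noteq> 0" using q_pos by (metis absK_0 power_int_not_zero less_irrefl)
  have radius: "absK a * inverse q = q powi j" using a q_pos by (simp add: power_int_add)
  let ?scale = "\<lambda>x :: 'k ^ 'n. a *s x"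
  have "inj ?scale" using \<open>a \<noteq> 0\<close> by (auto intro!: injI simp: vec_eq_iff)
  have scaled_ball: "kball (a *s v) (q powi j) = ?scale ` kball v (inverse q)" for v
    unfolding image_smult_kball[OF \<open>a \<noteq> 0\<close>] radius ..
  show thesis
  proof (rule that[of "?scale ` Tn"])
    show "finite (?scale ` Tn)" "card (?scale ` Tn) = residue_card absK ^ CARD('n)"
      using card_vec_entries_in[OF T(1)] T(2) inj_on_subset[OF \<open>inj ?scale\<close>]
      unfolding Tn_def by (auto simp: card_image)
    have "kball 0 (q powi (j + 1)) = ?scale ` kball 0 1"
      unfolding image_smult_kball[OF \<open>a \<noteq> 0\<close>] using a by simp
    also have "kball 0 1 = (\<Union>v\<in>Tn. kball v (inverse q))"
      unfolding Tn_def using T(3,4) by (rule kball_1_eq_Union)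
    also have "?scale ` (\<Union>v\<in>Tn. kball v (inverse q)) = (\<Union>v\<in>Tn. kball (a *s v) (q powi j))"
      unfolding image_UN scaled_ball ..
    finally show "kball 0 (q powi (j + 1)) = (\<Union>c\<in>?scale ` Tn. kball c (q powi j))"
      by simp
    show "disjoint_family_on (\<lambda>c. kball c (q powi j)) (?scale ` Tn)"
      unfolding disjoint_family_on_def
    proof (intro ballI impI)
      fix c c' assume "c \<in> ?scale ` Tn" "c' \<in> ?scale ` Tn" "c \<noteq> c'"
      then obtain v w where vw: "v \<in> Tn" "w \<in> Tn" "v \<noteq> w" "c = a *s v" "c' = a *s w" by auto
      moreover have "disjoint_family_on (\<lambda>v. kball v (inverse q)) Tn"
        unfolding Tn_def using T(5) by (rule disjoint_family_on_kball_inverse_q)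
      ultimately have "kball v (inverse q) \<inter> kball w (inverse q) = {}"
        unfolding disjoint_family_on_def by blast
      then show "kball c (q powi j) \<inter> kball c' (q powi j) = {}"
        unfolding vw(4,5) scaled_ball image_Int[OF \<open>inj ?scale\<close>, symmetric] by simp
    qed
  qed
qed

section \<open>Separability and polynomial maps\<close>

lemma countable_dense_K:
  obtains D :: "'k set" where "countable D" "\<And>x \<epsilon>. 0 < \<epsilon> \<Longrightarrow> \<exists>d\<in>D. absK (x - d) < \<epsilon>"
proof -
  obtain B where B: "finite B" "\<forall>x. \<exists>a. (\<forall>b\<in>B. a b \<in> rat_closure absK) \<and> x = (\<Sum>b\<in>B. a b * b)"
    using p_adic_field unfolding p_adic_field_def by blast
  define D where "D = (\<lambda>r. \<Sum>b\<in>B. of_rat (r b) * b) ` (PiE B (\<lambda>_. UNIV))"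
  have "\<exists>d\<in>D. absK (x - d) < \<epsilon>" if \<epsilon>: "0 < \<epsilon>" for x \<epsilon>
  proof -
    obtain a where a: "\<forall>b\<in>B. a b \<in> rat_closure absK" "x = (\<Sum>b\<in>B. a b * b)" using B(2) by blast
    define C where "C = (\<Sum>b\<in>B. absK b) + 1"
    have C: "0 < C" "\<And>b. b \<in> B \<Longrightarrow> absK b \<le> C"
      unfolding C_def using member_le_sum[of _ B absK] B(1) by (simp_all add: sum_nonneg add_nonneg_pos)
        (smt (verit, best) absK_nonneg)
    have "\<forall>b\<in>B. \<exists>r. absK (a b - of_rat r) < \<epsilon> / (2 * C)"
      using a(1) \<epsilon> C(1) unfolding rat_closure_def by simp
    then obtain r where r: "\<And>b. b \<in> B \<Longrightarrow> absK (a b - of_rat (r b)) < \<epsilon> / (2 * C)" by metis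
    have "(\<Sum>b\<in>B. of_rat (r b) * b) = (\<Sum>b\<in>B. of_rat (restrict r B b) * b)" by simp
    then have "(\<Sum>b\<in>B. of_rat (r b) * b) \<in> D" unfolding D_def by (intro image_eqI[of _ _ "restrict r B"]) auto
    moreover have "absK (\<Sum>b\<in>B. (a b - of_rat (r b)) * b) \<le> \<epsilon> / 2"
    proof (rule absK_sum_le)
      fix b assume b: "b \<in> B"
      have "absK ((a b - of_rat (r b)) * b) \<le> \<epsilon> / (2 * C) * C"
        unfolding absK_mult using r[OF b] C(2)[OF b] \<epsilon> C(1) by (intro mult_mono) auto
      then show "absK ((a b - of_rat (r b)) * b) \<le> \<epsilon> / 2" using C(1) by simp
    qed (use \<epsilon> in simp)
    ultimately show ?thesis using \<epsilon> unfolding a(2)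
      by (intro bexI[of _ "\<Sum>b\<in>B. of_rat (r b) * b"]) (auto simp: sum_subtractf left_diff_distrib)
  qed
  moreover have "countable D" unfolding D_def using B(1) by (intro countable_image countable_PiE) auto
  ultimately show thesis using that by blast
qed

lemma countable_dense_Kn:
  obtains D :: "('k ^ 'n) set" where "countable D" "\<And>x \<epsilon>. 0 < \<epsilon> \<Longrightarrow> \<exists>d\<in>D. normK absK (x - d) < \<epsilon>"
proof -
  obtain D where D: "countable D" "\<And>x \<epsilon>. 0 < \<epsilon> \<Longrightarrow> \<exists>d\<in>D. absK (x - d) < \<epsilon>"
    using countable_dense_K by blast
  have "\<exists>d\<in>vec_lambda ` PiE UNIV (\<lambda>_. D). normK absK (x - d) < \<epsilon>" if "0 < \<epsilon>" for x :: "'k ^ 'n" and \<epsilon>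
  proof -
    have "\<forall>i. \<exists>d\<in>D. absK (x $ i - d) < \<epsilon>" using D(2) that by blast
    then obtain d where d: "\<And>i. d i \<in> D" "\<And>i. absK (x $ i - d i) < \<epsilon>" by metis
    obtain i where "normK absK (x - vec_lambda d) = absK ((x - vec_lambda d) $ i)"
      using normK_attained by blast
    then show ?thesis using d by (intro bexI[of _ "vec_lambda d"]) (auto simp: PiE_iff)
  qed
  moreover have "countable (vec_lambda ` PiE UNIV (\<lambda>_. D) :: ('k ^ 'n) set)"
    using D(1) by (intro countable_image countable_PiE) auto
  ultimately show thesis using that by blast
qed

text \<open>Polynomial maps have this property; it makes |f| locally constant off the zeros of f,
  hence measurable, and bounded on balls.\<close>
definition lipschitz_on_kballs :: "('k ^ 'n \<Rightarrow> 'k) \<Rightarrow> bool" where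
  "lipschitz_on_kballs g \<longleftrightarrow> (\<forall>R. \<exists>B C. \<forall>x y. normK absK x \<le> R \<longrightarrow> normK absK y \<le> R \<longrightarrow>
      absK (g x) \<le> B \<and> absK (g y - g x) \<le> C * normK absK (y - x))"

lemma lipschitz_on_kballsE:
  assumes "lipschitz_on_kballs g"
  obtains B C where "0 \<le> B" "0 \<le> C" "\<And>x. normK absK x \<le> R \<Longrightarrow> absK (g x) \<le> B"
    "\<And>x y. normK absK x \<le> R \<Longrightarrow> normK absK y \<le> R \<Longrightarrow> absK (g y - g x) \<le> C * normK absK (y - x)"
proof -
  obtain B C where BC: "\<And>x y. normK absK x \<le> R \<Longrightarrow> normK absK y \<le> R \<Longrightarrow>
      absK (g x) \<le> B \<and> absK (g y - g x) \<le> C * normK absK (y - x)"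
    using assms unfolding lipschitz_on_kballs_def by meson
  show thesis
  proof (rule that[of "max 0 B" "max 0 C"])
    show "absK (g x) \<le> max 0 B" if "normK absK x \<le> R" for x
      using BC[OF that that] by simp
    show "absK (g y - g x) \<le> max 0 C * normK absK (y - x)"
      if "normK absK x \<le> R" "normK absK y \<le> R" for x y
      using BC[OF that] mult_right_mono[of C "max 0 C" "normK absK (y - x)"] by simp
  qed simp_all
qed

lemma lipschitz_on_kballs_const: "lipschitz_on_kballs (\<lambda>_. c)"
  unfolding lipschitz_on_kballs_def by (auto intro!: exI[of _ "absK c"])

lemma lipschitz_on_kballs_nth: "lipschitz_on_kballs (\<lambda>x :: 'k ^ 'n. x $ i)"
  unfolding lipschitz_on_kballs_def
proof
  fix R
  have "normK absK x \<le> R \<longrightarrow> normK absK y \<le> R \<longrightarrow>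
      absK (x $ i) \<le> R \<and> absK (y $ i - x $ i) \<le> 1 * normK absK (y - x)" for x y :: "'k ^ 'n"
    using absK_nth_le_normK[of x i] absK_nth_le_normK[of "y - x" i] by auto
  then show "\<exists>B C. \<forall>x y :: 'k ^ 'n. normK absK x \<le> R \<longrightarrow> normK absK y \<le> R \<longrightarrow>
      absK (x $ i) \<le> B \<and> absK (y $ i - x $ i) \<le> C * normK absK (y - x)"
    by blast
qed

lemma lipschitz_on_kballs_add:
  assumes "lipschitz_on_kballs g" "lipschitz_on_kballs h"
  shows "lipschitz_on_kballs (\<lambda>x. g x + h x)"
  unfolding lipschitz_on_kballs_def
proof
  fix R
  obtain B C where g: "0 \<le> B" "0 \<le> C" "\<And>x. normK absK x \<le> R \<Longrightarrow> absK (g x) \<le> B"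
    "\<And>x y. normK absK x \<le> R \<Longrightarrow> normK absK y \<le> R \<Longrightarrow> absK (g y - g x) \<le> C * normK absK (y - x)"
    using lipschitz_on_kballsE[OF assms(1), where R = R] by blast
  obtain B' C' where h: "0 \<le> B'" "0 \<le> C'" "\<And>x. normK absK x \<le> R \<Longrightarrow> absK (h x) \<le> B'"
    "\<And>x y. normK absK x \<le> R \<Longrightarrow> normK absK y \<le> R \<Longrightarrow> absK (h y - h x) \<le> C' * normK absK (y - x)"
    using lipschitz_on_kballsE[OF assms(2), where R = R] by blast
  have "absK (g x + h x) \<le> max B B'" if "normK absK x \<le> R" for x
    using absK_ultrametric[of "g x" "h x"] g(3)[OF that] h(3)[OF that] by simp
  moreover have "absK (g y + h y - (g x + h x)) \<le> max C C' * normK absK (y - x)"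
    if "normK absK x \<le> R" "normK absK y \<le> R" for x y
  proof -
    have "C * normK absK (y - x) \<le> max C C' * normK absK (y - x)"
      "C' * normK absK (y - x) \<le> max C C' * normK absK (y - x)"
      by (simp_all add: mult_right_mono)
    then show ?thesis
      using absK_ultrametric[of "g y - g x" "h y - h x"] g(4)[OF that] h(4)[OF that]
      by (simp add: algebra_simps)
  qed
  ultimately show "\<exists>B C. \<forall>x y. normK absK x \<le> R \<longrightarrow> normK absK y \<le> R \<longrightarrow>
      absK (g x + h x) \<le> B \<and> absK (g y + h y - (g x + h x)) \<le> C * normK absK (y - x)"
    by blast
qed

lemma lipschitz_on_kballs_mult:
  assumes "lipschitz_on_kballs g" "lipschitz_on_kballs h"
  shows "lipschitz_on_kballs (\<lambda>x. g x * h x)"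
  unfolding lipschitz_on_kballs_def
proof
  fix R
  obtain B C where g: "0 \<le> B" "0 \<le> C" "\<And>x. normK absK x \<le> R \<Longrightarrow> absK (g x) \<le> B"
    "\<And>x y. normK absK x \<le> R \<Longrightarrow> normK absK y \<le> R \<Longrightarrow> absK (g y - g x) \<le> C * normK absK (y - x)"
    using lipschitz_on_kballsE[OF assms(1), where R = R] by blast
  obtain B' C' where h: "0 \<le> B'" "0 \<le> C'" "\<And>x. normK absK x \<le> R \<Longrightarrow> absK (h x) \<le> B'"
    "\<And>x y. normK absK x \<le> R \<Longrightarrow> normK absK y \<le> R \<Longrightarrow> absK (h y - h x) \<le> C' * normK absK (y - x)"
    using lipschitz_on_kballsE[OF assms(2), where R = R] by blast
  have "absK (g x * h x) \<le> B * B'" if "normK absK x \<le> R" for x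
    unfolding absK_mult using g(3)[OF that] h(3)[OF that] g(1) by (intro mult_mono) auto
  moreover have "absK (g y * h y - g x * h x) \<le> (B * C' + C * B') * normK absK (y - x)"
    if "normK absK x \<le> R" "normK absK y \<le> R" for x y
  proof -
    have "absK (g y * (h y - h x)) \<le> B * (C' * normK absK (y - x))"
      unfolding absK_mult using g(3)[OF that(2)] h(4)[OF that] g(1) by (intro mult_mono) auto
    moreover have "absK ((g y - g x) * h x) \<le> C * normK absK (y - x) * B'"
      unfolding absK_mult using g(4)[OF that] h(3)[OF that(1)] g(2) h(1) by (intro mult_mono) auto
    moreover have "0 \<le> B * (C' * normK absK (y - x))" "0 \<le> C * normK absK (y - x) * B'"
      using g(1,2) h(1,2) by simp_all
    ultimately have bound: "max (absK (g y * (h y - h x))) (absK ((g y - g x) * h x))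
        \<le> (B * C' + C * B') * normK absK (y - x)"
      by (simp add: algebra_simps)
    have "g y * h y - g x * h x = g y * (h y - h x) + (g y - g x) * h x"
      by (simp add: algebra_simps)
    then have "absK (g y * h y - g x * h x) \<le> max (absK (g y * (h y - h x))) (absK ((g y - g x) * h x))"
      using absK_ultrametric by simp
    then show ?thesis using bound by linarith
  qed
  ultimately show "\<exists>B C. \<forall>x y. normK absK x \<le> R \<longrightarrow> normK absK y \<le> R \<longrightarrow>
      absK (g x * h x) \<le> B \<and> absK (g y * h y - g x * h x) \<le> C * normK absK (y - x)"
    by blast
qed

lemma lipschitz_on_kballs_sum:
  "(\<And>a. a \<in> S \<Longrightarrow> lipschitz_on_kballs (g a)) \<Longrightarrow> lipschitz_on_kballs (\<lambda>x. \<Sum>a\<in>S. g a x)"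
  by (induct S rule: infinite_finite_induct)
    (auto intro: lipschitz_on_kballs_const lipschitz_on_kballs_add)

lemma lipschitz_on_kballs_prod:
  "(\<And>a. a \<in> S \<Longrightarrow> lipschitz_on_kballs (g a)) \<Longrightarrow> lipschitz_on_kballs (\<lambda>x. \<Prod>a\<in>S. g a x)"
  by (induct S rule: infinite_finite_induct)
    (auto intro: lipschitz_on_kballs_const lipschitz_on_kballs_mult)

lemma lipschitz_on_kballs_power: "lipschitz_on_kballs g \<Longrightarrow> lipschitz_on_kballs (\<lambda>x. g x ^ k)"
  by (induct k) (auto intro: lipschitz_on_kballs_const lipschitz_on_kballs_mult)

lemma lipschitz_on_kballs_form_eval: "lipschitz_on_kballs (form_eval c)"
  unfolding form_eval_def
  by (intro lipschitz_on_kballs_sum lipschitz_on_kballs_mult lipschitz_on_kballs_const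
      lipschitz_on_kballs_prod lipschitz_on_kballs_power lipschitz_on_kballs_nth)

lemma lipschitz_on_kballs_absK_locally_constant:
  assumes "lipschitz_on_kballs g" "g x \<noteq> 0"
  shows "\<exists>j. \<forall>y\<in>kball x (q powi j). absK (g y) = absK (g x)"
proof -
  define R where "R = max 1 (normK absK x)"
  obtain B C where "0 \<le> B" "0 \<le> C" "\<And>x. normK absK x \<le> R \<Longrightarrow> absK (g x) \<le> B"
    "\<And>x y. normK absK x \<le> R \<Longrightarrow> normK absK y \<le> R \<Longrightarrow> absK (g y - g x) \<le> C * normK absK (y - x)"
    using lipschitz_on_kballsE[OF assms(1), where R = R] by blast
  note C = this(2,4)
  have "0 < absK (g x) / (C + 1)" using assms(2) absK_pos C(1) by simp
  moreover have "inverse q < 1" using q_gt_1 by (simp add: inverse_less_1_iff)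
  ultimately obtain n :: nat where n: "inverse q ^ n < absK (g x) / (C + 1)"
    using real_arch_pow_inv by blast
  have r: "q powi (- int n) = inverse q ^ n" by (simp add: power_int_minus power_inverse)
  have "inverse q ^ n \<le> 1" using \<open>inverse q < 1\<close> q_pos by (simp add: power_le_one)
  have "absK (g y) = absK (g x)" if y: "y \<in> kball x (q powi (- int n))" for y
  proof -
    have d: "normK absK (y - x) \<le> inverse q ^ n" using y unfolding kball_def r by simp
    have "normK absK y \<le> max (normK absK (y - x)) (normK absK x)"
      using normK_ultrametric[of "y - x" x] by simp
    then have "normK absK y \<le> R"
      using d \<open>inverse q ^ n \<le> 1\<close> unfolding R_def by linarith
    then have "absK (g y - g x) \<le> C * normK absK (y - x)"
      using C(2)[of x y] unfolding R_def by simp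
    also have "\<dots> \<le> (C + 1) * inverse q ^ n"
      using d C(1) by (intro mult_mono) simp_all
    also have "\<dots> < absK (g x)"
      using n C(1) by (simp add: pos_less_divide_eq mult.commute)
    finally show ?thesis using absK_add_eq_of_less[of "g y - g x" "g x"] by simp
  qed
  then show ?thesis by blast
qed

lemma form_eval_smult:
  assumes "hom_form d c"
  shows "form_eval c (e *s y) = e ^ d * form_eval c y"
proof -
  have "(\<Prod>i\<in>UNIV. ((e *s y) $ i) ^ a i) = e ^ d * (\<Prod>i\<in>UNIV. (y $ i) ^ a i)" if "c a \<noteq> 0" for a
  proof -
    have "(\<Prod>i\<in>UNIV. ((e *s y) $ i) ^ a i) = (\<Prod>i\<in>UNIV. e ^ a i) * (\<Prod>i\<in>UNIV. (y $ i) ^ a i)"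
      by (simp add: power_mult_distrib prod.distrib)
    also have "(\<Sum>i\<in>UNIV. a i) = d" using assms that unfolding hom_form_def by blast
    then have "(\<Prod>i\<in>UNIV. e ^ a i) = e ^ d" using power_sum[of e a UNIV] by simp
    finally show ?thesis .
  qed
  then show ?thesis unfolding form_eval_def by (simp add: sum_distrib_left algebra_simps)
qed

lemma qpow_eq_exp: "qpow absK z = exp (z * of_real (ln q))"
  unfolding qpow_def using of_real_powr_eq_exp[OF q_pos] by simp

lemma qpow_0 [simp]: "qpow absK 0 = 1"
  unfolding qpow_def using q_pos by simp

lemma qpow_diff: "qpow absK (a - b) = qpow absK a / qpow absK b"
  unfolding qpow_def by (rule powr_diff)

lemma qpow_nonzero [simp]: "qpow absK z \<noteq> 0"
  unfolding qpow_def using q_pos by simp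

lemma norm_qpow: "norm (qpow absK z) = q powr Re z"
  unfolding qpow_eq_exp norm_exp_eq_Re using q_pos by (simp add: powr_def)

lemma qpow_neq_1: "Re z \<noteq> 0 \<Longrightarrow> qpow absK z \<noteq> 1"
  using norm_qpow[of z] q_gt_1 by auto

lemma of_real_q_powi_powr: "complex_of_real (q powi k) powr z = qpow absK (of_int k * z)"
proof -
  have "complex_of_real (q powi k) powr z = exp (z * of_real (ln (q powi k)))"
    using q_pos by (intro of_real_powr_eq_exp) simp
  also have "ln (q powi k) = of_int k * ln q"
    using q_pos by (simp add: powr_real_of_int'[symmetric] ln_powr)
  finally show ?thesis by (simp add: qpow_eq_exp mult_ac)
qed

lemma of_real_q_powi: "complex_of_real (q powi k) = qpow absK (of_int k)"
  using of_real_q_powi_powr[of k 1] q_pos by simp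

end

section \<open>Haar measure\<close>

locale p_adic_haar = p_adic_absval absK for absK :: "'k::field_char_0 \<Rightarrow> real" +
  fixes M :: "('k ^ 'n::finite) measure"
  assumes haar_measure: "haar_measure absK M"
begin

lemma space_eq [simp]: "space M = UNIV"
  using haar_measure unfolding haar_measure_def by simp

lemma sets_eq: "sets M = sigma_sets UNIV {kball a r | a r. True}"
  using haar_measure unfolding haar_measure_def kball_def by simp

lemma kball_in_sets [measurable]: "kball a r \<in> sets M"
  unfolding sets_eq by (rule sigma_sets.Basic) blast

lemma emeasure_kball_eq: "emeasure M (kball a r) = emeasure M (kball 0 r)"
proof -
  have "\<forall>a. \<forall>A\<in>sets M. emeasure M ((\<lambda>x. a + x) ` A) = emeasure M A"
    using haar_measure unfolding haar_measure_def by blast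
  then show ?thesis using kball_translate[of a r] kball_in_sets[of 0 r] by simp
qed

lemma emeasure_kball_q_powi: "emeasure M (kball a (q powi j)) = ennreal ((q ^ CARD('n)) powi j)"
proof -
  have qn: "0 < q ^ CARD('n)" using q_pos by simp
  have step: "emeasure M (kball 0 (q powi (j + 1))) = ennreal (q ^ CARD('n)) * emeasure M (kball 0 (q powi j))" for j
  proof -
    obtain C :: "('k ^ 'n) set" where C: "finite C" "card C = residue_card absK ^ CARD('n)"
      "kball 0 (q powi (j + 1)) = (\<Union>c\<in>C. kball c (q powi j))"
      "disjoint_family_on (\<lambda>c. kball c (q powi j)) C"
      using kball_decomposition by blast
    have "emeasure M (kball 0 (q powi (j + 1))) = (\<Sum>c\<in>C. emeasure M (kball c (q powi j)))"
      unfolding C(3) using C(1,4) by (intro sum_emeasure[symmetric]) auto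
    also have "\<dots> = (\<Sum>c\<in>C. emeasure M (kball 0 (q powi j)))"
      by (rule sum.cong[OF refl emeasure_kball_eq])
    finally show ?thesis using C(2) by (simp add: ennreal_of_nat_eq_real_of_nat)
  qed
  have "emeasure M (kball 0 (q powi j)) = ennreal ((q ^ CARD('n)) powi j)"
  proof (induct j rule: int_induct[where k = 0])
    case base
    show ?case using haar_measure unfolding haar_measure_def kball_def by simp
  next
    case (step1 i)
    then show ?case using step[of i] qn by (simp add: ennreal_mult[symmetric] power_int_add)
  next
    case (step2 i)
    then have i: "ennreal ((q ^ CARD('n)) powi i) = ennreal (q ^ CARD('n)) * emeasure M (kball 0 (q powi (i - 1)))"
      using step[of "i - 1"] by simp
    show ?case
    proof (cases "emeasure M (kball 0 (q powi (i - 1)))")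
      case (real r)
      then have "(q ^ CARD('n)) powi i = q ^ CARD('n) * r"
        using i qn by (simp add: ennreal_mult[symmetric])
      then have "r = (q ^ CARD('n)) powi (i - 1)" using qn by (simp add: power_int_diff field_simps)
      then show ?thesis using real by simp
    qed (use i qn in \<open>simp add: ennreal_mult_top\<close>)
  qed
  then show ?thesis using emeasure_kball_eq[of a] by simp
qed

lemma emeasure_kball_finite: "emeasure M (kball a r) < \<infinity>"
proof -
  obtain k where "r \<le> q powi k"
    using q_gt_1 real_arch_pow[of q r] by (metis less_le_not_le power_int_of_nat)
  then have "emeasure M (kball a r) \<le> emeasure M (kball a (q powi k))"
    by (intro emeasure_mono kball_subset_kball) simp_all
  then show ?thesis by (simp add: emeasure_kball_q_powi order_le_less_trans)
qed

lemma emeasure_singleton: "emeasure M {a} = 0"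
proof -
  define c where "c = inverse (q ^ CARD('n))"
  have c: "0 < c" "c < 1" unfolding c_def using q_gt_1 by (auto simp: inverse_less_1_iff one_less_power)
  have le: "emeasure M {a} \<le> ennreal (c ^ j)" for j :: nat
  proof -
    have "{a} \<subseteq> kball a (q powi (- int j))" by (simp add: kball_def)
    then have "emeasure M {a} \<le> emeasure M (kball a (q powi (- int j)))"
      by (rule emeasure_mono) simp
    also have "\<dots> = ennreal ((q ^ CARD('n)) powi (- int j))"
      by (rule emeasure_kball_q_powi)
    also have "(q ^ CARD('n)) powi (- int j) = c ^ j"
      unfolding c_def by (simp add: power_int_minus power_inverse)
    finally show ?thesis .
  qed
  then obtain x where x: "emeasure M {a} = ennreal x" "0 \<le> x"
    using ennreal_cases[of "emeasure M {a}"] by (metis ennreal_less_top not_less top.extremum_uniqueI)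
  have "x \<le> c ^ j" for j using le[of j] x c by (simp add: ennreal_le_iff)
  then have "x = 0"
    using real_arch_pow_inv[OF _ c(2)] x(2) by (metis leD less_eq_real_def)
  then show ?thesis using x by simp
qed

lemma emeasure_kball_mult_radius:
  assumes "e \<noteq> 0"
  shows "emeasure M (kball a (absK e * r)) = ennreal (absK e ^ CARD('n)) * emeasure M (kball a r)"
proof (cases r "0 :: real" rule: linorder_cases)
  case greater
  obtain k where k: "q powi k \<le> r" "r < q powi (k + 1)" using exists_q_powi_bracket greater by blast
  obtain m where m: "absK e = q powi m" using absK_value_group assms by blast
  have "q powi (k + m) \<le> absK e * r" "absK e * r < q powi (k + m + 1)"
    using k q_pos unfolding m by (simp_all add: power_int_add mult.commute)
  then have "emeasure M (kball a (absK e * r)) = ennreal ((q ^ CARD('n)) powi (k + m))"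
    using kball_eq_kball_q_powi[of "k + m" "absK e * r" a] emeasure_kball_q_powi by simp
  also have "(q ^ CARD('n)) powi (k + m) = absK e ^ CARD('n) * (q ^ CARD('n)) powi k"
    unfolding m power_int_power power_int_power' using q_pos by (simp add: power_int_add algebra_simps)
  finally show ?thesis
    using kball_eq_kball_q_powi[OF k, of a] emeasure_kball_q_powi q_pos by (simp add: ennreal_mult)
qed (simp_all add: kball_0 emeasure_singleton kball_empty assms mult_pos_neg absK_pos)

lemma Int_stable_kballs: "Int_stable {kball (a :: 'k ^ 'n) r | a r. True}"
proof (rule Int_stableI)
  fix A B assume "A \<in> {kball (a :: 'k ^ 'n) r | a r. True}" "B \<in> {kball (a :: 'k ^ 'n) r | a r. True}"
  then obtain a r b r' where AB: "A = kball a r" "B = kball b r'" by blast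
  have "{} = kball (0 :: 'k ^ 'n) (- 1)" by (rule sym[OF kball_empty]) simp
  then show "A \<inter> B \<in> {kball a r | a r. True}"
    using kball_Int_cases[of a r b r'] unfolding AB by auto
qed

lemma measurable_smult [measurable]: "e \<noteq> 0 \<Longrightarrow> (\<lambda>y. e *s y) \<in> measurable M M"
  by (rule measurable_sigma_sets[OF sets_eq]) (auto simp: vimage_smult_kball)

lemma distr_smult:
  assumes e: "e \<noteq> 0"
  shows "distr M M (\<lambda>y. e *s y) = density M (\<lambda>_. ennreal (inverse (absK e) ^ CARD('n)))"
proof (rule measure_eqI_generator_eq[OF Int_stable_kballs, where \<Omega> = UNIV and A = "\<lambda>i. kball 0 (q powi int i)"])
  show "{kball (a :: 'k ^ 'n) r | a r. True} \<subseteq> Pow UNIV" by simp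
  show "sets (distr M M (\<lambda>y. e *s y)) = sigma_sets UNIV {kball a r | a r. True}"
    "sets (density M (\<lambda>_. ennreal (inverse (absK e) ^ CARD('n)))) = sigma_sets UNIV {kball a r | a r. True}"
    using sets_eq by simp_all
  show "range (\<lambda>i. kball (0 :: 'k ^ 'n) (q powi int i)) \<subseteq> {kball a r | a r. True}" by blast
  show "(\<Union>i. kball (0 :: 'k ^ 'n) (q powi int i)) = UNIV"
  proof (intro set_eqI iffI UNIV_I)
    fix x :: "'k ^ 'n"
    obtain i :: nat where "normK absK x \<le> q ^ i"
      using q_gt_1 real_arch_pow[of q "normK absK x"] by (metis less_le_not_le)
    then show "x \<in> (\<Union>i. kball 0 (q powi int i))" by (auto simp: kball_def)
  qed
  show "emeasure (distr M M (\<lambda>y. e *s y)) (kball 0 (q powi int i)) \<noteq> \<infinity>" for i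
    using emeasure_kball_finite e by (simp add: emeasure_distr vimage_smult_kball less_top[symmetric])
  fix X assume "X \<in> {kball (a :: 'k ^ 'n) r | a r. True}"
  then obtain b r where X: "X = kball b r" by blast
  have ae: "0 < absK e" using absK_pos e by simp
  have "emeasure M X = emeasure M (kball (inverse e *s b) r)"
    unfolding X by (metis emeasure_kball_eq)
  also have "\<dots> = ennreal (absK e ^ CARD('n)) * emeasure M (kball (inverse e *s b) (r / absK e))"
    using emeasure_kball_mult_radius[OF e, of "inverse e *s b" "r / absK e"] ae e by simp
  moreover have "ennreal (inverse (absK e) ^ CARD('n)) * ennreal (absK e ^ CARD('n)) = 1"
    using ae e by (simp add: ennreal_mult[symmetric] power_mult_distrib[symmetric] del: power_mult_distrib)
  ultimately have "ennreal (inverse (absK e) ^ CARD('n)) * emeasure M X = emeasure M (kball (inverse e *s b) (r / absK e))"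
    by (simp add: mult.assoc[symmetric])
  then show "emeasure (distr M M (\<lambda>y. e *s y)) X = emeasure (density M (\<lambda>_. ennreal (inverse (absK e) ^ CARD('n)))) X"
    using e unfolding X by (simp add: emeasure_distr vimage_smult_kball emeasure_density_const)
qed

lemma integral_smult:
  fixes g :: "'k ^ 'n \<Rightarrow> 'b::{banach, second_countable_topology}"
  assumes e: "e \<noteq> 0" and [measurable]: "g \<in> borel_measurable M"
  shows "(\<integral>y. g (e *s y) \<partial>M) = (inverse (absK e) ^ CARD('n)) *\<^sub>R (\<integral>x. g x \<partial>M)"
proof -
  have "(\<integral>y. g (e *s y) \<partial>M) = integral\<^sup>L (distr M M (\<lambda>y. e *s y)) g"
    using e by (simp add: integral_distr)
  also have "\<dots> = (\<integral>x. (inverse (absK e) ^ CARD('n)) *\<^sub>R g x \<partial>M)"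
    unfolding distr_smult[OF e] by (rule integral_density) auto
  finally show ?thesis by simp
qed

lemma kopen_in_sets:
  assumes U: "\<And>x. x \<in> U \<Longrightarrow> \<exists>j. kball x (q powi j) \<subseteq> U"
  shows "U \<in> sets M"
proof -
  obtain D :: "('k ^ 'n) set" where D: "countable D" "\<And>x \<epsilon>. 0 < \<epsilon> \<Longrightarrow> \<exists>d\<in>D. normK absK (x - d) < \<epsilon>"
    using countable_dense_Kn by blast
  define F where "F = {kball d (q powi j) | d j. d \<in> D \<and> kball d (q powi j) \<subseteq> U}"
  have "F \<subseteq> (\<lambda>(d, j). kball d (q powi j)) ` (D \<times> (UNIV :: int set))" unfolding F_def by auto
  moreover have "countable ((\<lambda>(d, j). kball d (q powi j)) ` (D \<times> (UNIV :: int set)))"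
    using D(1) by (intro countable_image countable_SIGMA) auto
  ultimately have "countable F" by (rule countable_subset)
  have "U = \<Union>F"
  proof (intro set_eqI iffI)
    fix x assume "x \<in> U"
    then obtain j where j: "kball x (q powi j) \<subseteq> U" using U by blast
    obtain d where d: "d \<in> D" "normK absK (x - d) < q powi j" using D(2)[of "q powi j" x] q_pos by auto
    then have "kball d (q powi j) = kball x (q powi j)"
      using normK_minus_commute by (intro kball_eq_kball) simp
    then have "kball d (q powi j) \<in> F" using j d(1) unfolding F_def by auto
    moreover have "x \<in> kball d (q powi j)" using d(2) by (simp add: kball_def)
    ultimately show "x \<in> \<Union>F" by blast
  qed (auto simp: F_def)
  moreover have "F \<subseteq> sets M" unfolding F_def by auto
  ultimately show ?thesis using \<open>countable F\<close> by (simp add: sets.countable_Union)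
qed

lemma borel_measurable_locally_constant:
  fixes g :: "'k ^ 'n \<Rightarrow> real"
  assumes vals: "\<And>x. g x = 0 \<or> (\<exists>k. g x = q powi k)"
    and loc: "\<And>x. g x \<noteq> 0 \<Longrightarrow> \<exists>j. \<forall>y\<in>kball x (q powi j). g y = g x"
  shows "(\<lambda>x. \<phi> (g x)) \<in> borel_measurable M"
proof -
  define A where "A = insert 0 (range (\<lambda>k::int. q powi k))"
  have kopen: "{x. P (g x)} \<in> sets M" if P0: "\<not> P 0" for P
  proof (rule kopen_in_sets)
    fix x assume x: "x \<in> {x. P (g x)}"
    then have "g x \<noteq> 0" using P0 by auto
    then obtain j where "\<forall>y\<in>kball x (q powi j). g y = g x" using loc by blast
    then have "kball x (q powi j) \<subseteq> {x. P (g x)}" using x by auto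
    then show "\<exists>j. kball x (q powi j) \<subseteq> {x. P (g x)}" ..
  qed
  have "g -` {a} \<inter> space M \<in> sets M" for a
  proof (cases "a = 0")
    case True
    have "g -` {a} \<inter> space M = space M - {x. g x \<noteq> 0}" using True by auto
    then show ?thesis using kopen[of "\<lambda>y. y \<noteq> 0"] sets.compl_sets by (metis space_eq)
  next
    case False
    then show ?thesis using kopen[of "\<lambda>y. y = a"] by (simp add: vimage_def Collect_conj_eq[symmetric])
  qed
  moreover have "countable A" unfolding A_def by simp
  ultimately have "g \<in> measurable M (count_space A)"
    using vals unfolding A_def by (subst measurable_count_space_eq_countable) auto
  then show ?thesis by (rule measurable_compose) simp
qed

lemma borel_measurable_normK [measurable]: "(\<lambda>x. \<phi> (normK absK x)) \<in> borel_measurable M"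
proof (rule borel_measurable_locally_constant)
  fix x :: "'k ^ 'n"
  show "normK absK x = 0 \<or> (\<exists>k. normK absK x = q powi k)" using normK_value_group by auto
  assume "normK absK x \<noteq> 0"
  then obtain k where k: "normK absK x = q powi k" using normK_value_group by auto
  have "normK absK y = normK absK x" if "y \<in> kball x (q powi (k - 1))" for y
  proof -
    have "normK absK (y - x) < normK absK x"
      using that q_powi_less_iff[of "k - 1" k] unfolding kball_def k by simp
    then show ?thesis using normK_add_eq_of_less[of "y - x" x] by simp
  qed
  then show "\<exists>j. \<forall>y\<in>kball x (q powi j). normK absK y = normK absK x" by blast
qed

lemma borel_measurable_absK_lipschitz:
  assumes "lipschitz_on_kballs g"
  shows "(\<lambda>x. \<phi> (absK (g x))) \<in> borel_measurable M"
  using absK_value_group lipschitz_on_kballs_absK_locally_constant[OF assms]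
  by (intro borel_measurable_locally_constant) auto

section \<open>Integrals against the \<Omega>_l\<close>

lemma integrable_kball_supported:
  fixes g :: "'k ^ 'n \<Rightarrow> complex"
  assumes "g \<in> borel_measurable M"
    and "\<And>x. R < normK absK x \<Longrightarrow> g x = 0"
    and "\<And>x. normK absK x \<le> R \<Longrightarrow> norm (g x) \<le> B"
  shows "integrable M g"
proof (rule integrableI_bounded_set[where A = "kball 0 R" and B = B])
  show "emeasure M (kball 0 R) < \<infinity>" by (rule emeasure_kball_finite)
  show "AE x in M. x \<in> kball 0 R \<longrightarrow> norm (g x) \<le> B"
    "AE x in M. x \<notin> kball 0 R \<longrightarrow> g x = 0"
    using assms(2,3) by (auto simp: kball_def)
qed (use assms(1) in simp_all)

lemma Omega_at_0 [simp]: "Omega absK l 0 = 1"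
  unfolding Omega_def using q_pos by simp

lemma Omega_eq_0: "q powi (- l) < normK absK x \<Longrightarrow> Omega absK l x = 0"
  unfolding Omega_def by simp

lemma norm_Omega_le: "norm (Omega absK l x) \<le> 1"
  unfolding Omega_def by simp

lemma borel_measurable_Omega [measurable]: "Omega absK l \<in> borel_measurable M"
  unfolding Omega_def by measurable

lemma Omega_0_eq_indicator: "Omega absK 0 x = indicator {x. normK absK x \<le> 1} x"
  unfolding Omega_def by simp

lemma Omega_smult: "absK e = q powi (- l) \<Longrightarrow> Omega absK l (e *s y) = Omega absK 0 y"
  unfolding Omega_def normK_smult using q_pos by (simp add: mult_le_cancel_left1)

lemma integrable_Omega_mult:
  assumes h: "h \<in> borel_measurable M" "\<And>R. \<exists>B. \<forall>x. normK absK x \<le> R \<longrightarrow> norm (h x) \<le> B"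
  shows "integrable M (\<lambda>x. Omega absK l x * h x)"
proof -
  obtain B where B: "\<And>x. normK absK x \<le> q powi (- l) \<Longrightarrow> norm (h x) \<le> B"
    using h(2) by blast
  show ?thesis
  proof (rule integrable_kball_supported[where R = "q powi (- l)" and B = B])
    fix x :: "'k ^ 'n"
    assume "normK absK x \<le> q powi (- l)"
    then show "norm (Omega absK l x * h x) \<le> B"
      using B norm_Omega_le[of l x] unfolding norm_mult by (metis mult_left_le_one_le norm_ge_zero order_trans)
  qed (use h(1) in \<open>simp_all add: Omega_eq_0\<close>)
qed

lemma integrable_Omega: "integrable M (Omega absK l)"
  by (rule integrable_kball_supported[where R = "q powi (- l)" and B = 1])
    (simp_all add: Omega_eq_0 norm_Omega_le)

lemma integral_Omega: "(\<integral>x. Omega absK l x \<partial>M) = qpow absK (- of_int l * of_nat CARD('n))"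
proof -
  have "(\<integral>x. Omega absK l x \<partial>M) = (\<integral>x. complex_of_real (indicator (kball 0 (q powi (- l))) x) \<partial>M)"
    unfolding Omega_def kball_def by (intro Bochner_Integration.integral_cong) (auto simp: indicator_def)
  also have "\<dots> = complex_of_real (measure M (kball 0 (q powi (- l))))"
    by simp
  also have "measure M (kball 0 (q powi (- l))) = q powi (- l * int CARD('n))"
    using emeasure_kball_q_powi[of 0 "- l"] q_pos unfolding measure_def
    by (simp add: power_int_power mult.commute)
  also have "complex_of_real (q powi (- l * int CARD('n))) = qpow absK (- of_int l * of_nat CARD('n))"
    unfolding of_real_q_powi by simp
  finally show ?thesis .
qed

lemma integral_Omega_homogeneous:
  assumes h [measurable]: "h \<in> borel_measurable M"
    and hom: "\<And>e y. e \<noteq> 0 \<Longrightarrow> h (e *s y) = complex_of_real (absK e) powr w * h y"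
  shows "(\<integral>x. Omega absK l x * h x \<partial>M) =
    qpow absK (- of_int l * (w + of_nat CARD('n))) * (\<integral>x. Omega absK 0 x * h x \<partial>M)"
proof -
  obtain e where e: "absK e = q powi (- l)" using absK_surj by blast
  then have "e \<noteq> 0" using q_pos by (metis absK_0 power_int_not_zero less_irrefl)
  have "Omega absK l (e *s y) * h (e *s y) = qpow absK (- of_int l * w) * (Omega absK 0 y * h y)" for y
    unfolding hom[OF \<open>e \<noteq> 0\<close>] Omega_smult[OF e] e of_real_q_powi_powr by simp
  then have "(\<integral>y. Omega absK 0 y * h y \<partial>M) * qpow absK (- of_int l * w)
      = (\<integral>y. Omega absK l (e *s y) * h (e *s y) \<partial>M)"
    by (simp add: mult.commute)
  also have "\<dots> = (inverse (absK e) ^ CARD('n)) *\<^sub>R (\<integral>x. Omega absK l x * h x \<partial>M)"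
    by (rule integral_smult[OF \<open>e \<noteq> 0\<close>]) measurable
  also have "\<dots> = complex_of_real (inverse (absK e) ^ CARD('n)) * (\<integral>x. Omega absK l x * h x \<partial>M)"
    by (rule scaleR_conv_of_real)
  also have "inverse (absK e) ^ CARD('n) = q powi (l * int CARD('n))"
    unfolding e by (simp add: power_int_minus power_int_power')
  also have "complex_of_real (q powi (l * int CARD('n))) = qpow absK (of_int l * of_nat CARD('n))"
    unfolding of_real_q_powi by simp
  finally have "(\<integral>y. Omega absK 0 y * h y \<partial>M) * qpow absK (- of_int l * w)
      = qpow absK (of_int l * of_nat CARD('n)) * (\<integral>x. Omega absK l x * h x \<partial>M)" .
  then have "(\<integral>x. Omega absK l x * h x \<partial>M)
      = qpow absK (- of_int l * w) / qpow absK (of_int l * of_nat CARD('n)) * (\<integral>y. Omega absK 0 y * h y \<partial>M)"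
    by (simp add: field_simps)
  also have "qpow absK (- of_int l * w) / qpow absK (of_int l * of_nat CARD('n))
      = qpow absK (- of_int l * (w + of_nat CARD('n)))"
    by (simp add: distrib_left qpow_diff)
  finally show ?thesis .
qed

lemma normK_powr_smult:
  "e \<noteq> 0 \<Longrightarrow> complex_of_real (normK absK (e *s y)) powr z =
    complex_of_real (absK e) powr z * complex_of_real (normK absK y) powr z"
  unfolding normK_smult of_real_mult by (rule powr_times_real) simp_all

lemma normK_powr_bounded:
  "0 \<le> Re z \<Longrightarrow> \<exists>B. \<forall>x. normK absK x \<le> R \<longrightarrow> norm (complex_of_real (normK absK x) powr z) \<le> B"
  using norm_of_real_powr_le[OF normK_nonneg] by blast

lemma absK_form_powr_smult:
  assumes "hom_form d c" "e \<noteq> 0"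
  shows "complex_of_real (absK (form_eval c (e *s y))) powr s =
    complex_of_real (absK e) powr (of_nat d * s) * complex_of_real (absK (form_eval c y)) powr s"
proof -
  have "complex_of_real (absK (form_eval c (e *s y))) powr s =
      complex_of_real (absK e ^ d) powr s * complex_of_real (absK (form_eval c y)) powr s"
    unfolding form_eval_smult[OF assms(1)] absK_mult absK_power of_real_mult
    by (rule powr_times_real) simp_all
  then show ?thesis unfolding of_real_power_powr[OF absK_pos[OF assms(2)]] .
qed

lemma absK_form_powr_bounded:
  "0 \<le> Re s \<Longrightarrow> \<exists>B. \<forall>x. normK absK x \<le> R \<longrightarrow> norm (complex_of_real (absK (form_eval c x)) powr s) \<le> B"
  using lipschitz_on_kballsE[OF lipschitz_on_kballs_form_eval, where R = R]
    norm_of_real_powr_le[OF absK_nonneg] by metis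

lemma integral_Delta_homogeneous:
  assumes "finite L"
    and h [measurable]: "h \<in> borel_measurable M"
    and bounded: "\<And>R. \<exists>B. \<forall>x. normK absK x \<le> R \<longrightarrow> norm (h x) \<le> B"
    and hom: "\<And>e y. e \<noteq> 0 \<Longrightarrow> h (e *s y) = complex_of_real (absK e) powr w * h y"
  shows "(\<integral>x. (\<Sum>l\<in>L. a l * Omega absK l x) * h x \<partial>M) =
    (\<Sum>l\<in>L. a l * qpow absK (- of_int l * (w + of_nat CARD('n)))) * (\<integral>x. Omega absK 0 x * h x \<partial>M)"
proof -
  have "(\<integral>x. (\<Sum>l\<in>L. a l * Omega absK l x) * h x \<partial>M) = (\<integral>x. (\<Sum>l\<in>L. a l * (Omega absK l x * h x)) \<partial>M)"
    by (simp add: sum_distrib_right mult.assoc)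
  also have "\<dots> = (\<Sum>l\<in>L. (\<integral>x. a l * (Omega absK l x * h x) \<partial>M))"
    by (intro Bochner_Integration.integral_sum integrable_mult_right integrable_Omega_mult[OF h bounded])
  also have "\<dots> = (\<Sum>l\<in>L. a l * (qpow absK (- of_int l * (w + of_nat CARD('n))) * (\<integral>x. Omega absK 0 x * h x \<partial>M)))"
    unfolding integral_mult_right_zero
    by (rule sum.cong[OF refl], subst integral_Omega_homogeneous[OF h hom]) simp_all
  finally show ?thesis by (simp add: sum_distrib_right mult.assoc)
qed

text \<open>\<Omega>_0 - \<Omega>_1 lives on the sphere |x| = 1, where the power is 1, and the integral against
  \<Omega>_1 is the one against \<Omega>_0 rescaled.\<close>
lemma integral_Omega_normK_powr:
  assumes z: "0 \<le> Re z"
  shows "(1 - qpow absK (- (z + of_nat CARD('n)))) * (\<integral>x. Omega absK 0 x * complex_of_real (normK absK x) powr z \<partial>M)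
    = 1 - qpow absK (- of_nat CARD('n))"
proof -
  let ?P = "\<lambda>x. complex_of_real (normK absK x) powr z"
  define J where "J l = (\<integral>x. Omega absK l x * ?P x \<partial>M)" for l
  have integrable: "integrable M (\<lambda>x. Omega absK l x * ?P x)" for l
    using normK_powr_bounded[OF z] by (intro integrable_Omega_mult) simp_all
  have shell: "Omega absK 0 x * ?P x = (Omega absK 0 x - Omega absK 1 x) + Omega absK 1 x * ?P x" for x
  proof (cases "q powi (- 1) < normK absK x \<and> normK absK x \<le> 1")
    case True
    moreover have "0 < q powi (- 1)" using q_pos by simp
    ultimately have "x \<noteq> 0" by auto
    then obtain k where "normK absK x = q powi k" using normK_value_group by blast
    moreover have "k = 0" using True q_powi_less_iff[of "- 1" k] q_powi_le_iff[of k 0] calculation by simp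
    ultimately have "normK absK x = 1" by simp
    then show ?thesis unfolding Omega_def by simp
  next
    case False
    have "q powi (- 1) \<le> 1" using q_gt_1 by (simp add: power_int_minus inverse_le_1_iff)
    then show ?thesis using False unfolding Omega_def by auto
  qed
  have "J 0 = (\<integral>x. (Omega absK 0 x - Omega absK 1 x) + Omega absK 1 x * ?P x \<partial>M)"
    by (simp only: J_def shell)
  also have "\<dots> = (\<integral>x. Omega absK 0 x \<partial>M) - (\<integral>x. Omega absK 1 x \<partial>M) + J 1"
    unfolding J_def using integrable_Omega integrable by simp
  also have "J 1 = qpow absK (- (z + of_nat CARD('n))) * J 0"
    unfolding J_def by (subst integral_Omega_homogeneous[where w = z]) (simp_all add: normK_powr_smult)
  finally show ?thesis unfolding J_def integral_Omega by (simp add: algebra_simps)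
qed

lemma riesz_eq_integral:
  assumes \<Phi> [measurable]: "\<Phi> \<in> borel_measurable M"
    and bounded: "\<And>x. norm (\<Phi> x) \<le> B" and support: "\<And>x. R < normK absK x \<Longrightarrow> \<Phi> x = 0"
    and z: "0 \<le> Re (\<alpha> - of_nat CARD('n))"
  shows "riesz absK M \<alpha> \<Phi> = (\<Phi> 0 * (1 - qpow absK (- of_nat CARD('n))) + (1 - qpow absK (- \<alpha>)) *
      (\<integral>x. (\<Phi> x - \<Phi> 0 * Omega absK 0 x) * complex_of_real (normK absK x) powr (\<alpha> - of_nat CARD('n)) \<partial>M))
      / (1 - qpow absK (\<alpha> - of_nat CARD('n)))"
proof -
  let ?P = "\<lambda>x. complex_of_real (normK absK x) powr (\<alpha> - of_nat CARD('n))"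
  let ?I1 = "\<lambda>x. indicator {x. normK absK x \<le> 1} x *\<^sub>R ((\<Phi> x - \<Phi> 0) * ?P x)"
  let ?I2 = "\<lambda>x. indicator {x. 1 < normK absK x} x *\<^sub>R (\<Phi> x * ?P x)"
  have B: "0 \<le> B" using bounded[of 0] norm_ge_zero order_trans by blast
  have "integrable M ?I1"
  proof (rule integrable_kball_supported[where R = 1 and B = "2 * B"])
    show "norm (?I1 x) \<le> 2 * B" if "normK absK x \<le> 1" for x
    proof -
      have "norm (\<Phi> x - \<Phi> 0) \<le> 2 * B" using norm_triangle_ineq4[of "\<Phi> x" "\<Phi> 0"] bounded[of x] bounded[of 0] by simp
      moreover have "norm (?P x) \<le> 1" using norm_of_real_powr_le[OF normK_nonneg that z] by simp
      ultimately show ?thesis unfolding norm_scaleR norm_mult using B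
        by (auto simp: indicator_def intro: order_trans[OF mult_mono])
    qed
  qed (auto simp: indicator_def)
  moreover have "integrable M ?I2"
  proof (rule integrable_kball_supported[where R = R and B = "B * R powr Re (\<alpha> - of_nat CARD('n))"])
    show "norm (?I2 x) \<le> B * R powr Re (\<alpha> - of_nat CARD('n))" if "normK absK x \<le> R" for x
      unfolding norm_scaleR norm_mult using bounded[of x] norm_of_real_powr_le[OF normK_nonneg that z] B
      by (auto simp: indicator_def intro: mult_mono)
  qed (auto simp: support)
  moreover have "?I1 x + ?I2 x = (\<Phi> x - \<Phi> 0 * Omega absK 0 x) * ?P x" for x
    by (simp add: indicator_def Omega_0_eq_indicator)
  ultimately have parts: "(LINT x : {x. normK absK x \<le> 1} | M. (\<Phi> x - \<Phi> 0) * ?P x)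
      + (LINT x : {x. normK absK x > 1} | M. \<Phi> x * ?P x)
      = (\<integral>x. (\<Phi> x - \<Phi> 0 * Omega absK 0 x) * ?P x \<partial>M)"
    unfolding set_lebesgue_integral_def by (simp flip: Bochner_Integration.integral_add)
  show ?thesis unfolding riesz_def Let_def parts[symmetric] by (simp add: add_divide_distrib ring_distribs)
qed

lemma norm_sum_Omega_le: "norm (\<Sum>l\<in>L. a l * Omega absK l x) \<le> (\<Sum>l\<in>L. norm (a l))"
proof -
  have "norm (a l * Omega absK l x) \<le> norm (a l)" for l
    unfolding norm_mult using norm_Omega_le[of l x] by (simp add: mult_right_le_one_le)
  then show ?thesis by (rule order_trans[OF norm_sum sum_mono])
qed

lemma sum_Omega_eq_0:
  assumes "finite L" "(\<Sum>l\<in>L. q powi (- l)) < normK absK x"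
  shows "(\<Sum>l\<in>L. a l * Omega absK l x) = 0"
proof (rule sum.neutral, rule ballI)
  fix l assume "l \<in> L"
  then have "q powi (- l) \<le> (\<Sum>l\<in>L. q powi (- l))"
    using assms(1) q_pos by (intro member_le_sum) simp_all
  then have "q powi (- l) < normK absK x" using assms(2) by linarith
  then show "a l * Omega absK l x = 0" by (simp add: Omega_eq_0)
qed

lemma riesz_Delta:
  assumes L: "finite L" and z: "0 \<le> Re z"
  shows "riesz absK M (z + of_nat CARD('n)) (\<lambda>x. \<Sum>l\<in>L. a l * Omega absK l x) =
    (\<Sum>l\<in>L. a l * qpow absK (- of_int l * (z + of_nat CARD('n))))
      * (1 - qpow absK (- of_nat CARD('n))) / (1 - qpow absK z)"
proof -
  define \<Phi> where "\<Phi> x = (\<Sum>l\<in>L. a l * Omega absK l x)" for x :: "'k ^ 'n"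
  define S where "S = (\<Sum>l\<in>L. a l * qpow absK (- of_int l * (z + of_nat CARD('n))))"
  let ?P = "\<lambda>x. complex_of_real (normK absK x) powr z"
  define J where "J = (\<integral>x. Omega absK 0 x * ?P x \<partial>M)"
  have integrable: "integrable M (\<lambda>x. Omega absK l x * ?P x)" for l
    using normK_powr_bounded[OF z] by (intro integrable_Omega_mult) simp_all
  have "integrable M (\<lambda>x. \<Phi> x * ?P x)"
    unfolding \<Phi>_def sum_distrib_right mult.assoc using integrable by simp
  then have "(\<integral>x. (\<Phi> x - \<Phi> 0 * Omega absK 0 x) * ?P x \<partial>M) = (\<integral>x. \<Phi> x * ?P x \<partial>M) - \<Phi> 0 * J"
    unfolding J_def left_diff_distrib mult.assoc using integrable by simp
  also have "(\<integral>x. \<Phi> x * ?P x \<partial>M) = S * J"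
    unfolding \<Phi>_def S_def J_def using normK_powr_smult normK_powr_bounded[OF z]
    by (intro integral_Delta_homogeneous L) simp_all
  finally have integral: "(\<integral>x. (\<Phi> x - \<Phi> 0 * Omega absK 0 x) * ?P x \<partial>M) = S * J - \<Phi> 0 * J" .
  have "\<Phi> \<in> borel_measurable M" unfolding \<Phi>_def by measurable
  moreover have "norm (\<Phi> x) \<le> (\<Sum>l\<in>L. norm (a l))" for x
    unfolding \<Phi>_def by (rule norm_sum_Omega_le)
  moreover have "\<Phi> x = 0" if "(\<Sum>l\<in>L. q powi (- l)) < normK absK x" for x
    unfolding \<Phi>_def using L that by (rule sum_Omega_eq_0)
  moreover have "0 \<le> Re (z + of_nat CARD('n) - of_nat CARD('n))" using z by simp
  ultimately have "riesz absK M (z + of_nat CARD('n)) \<Phi> = (\<Phi> 0 * (1 - qpow absK (- of_nat CARD('n))) +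
      (1 - qpow absK (- (z + of_nat CARD('n)))) * (S * J - \<Phi> 0 * J)) / (1 - qpow absK z)"
    by (subst riesz_eq_integral) (simp_all only: add_diff_cancel_right' integral)
  also have "\<dots> = S * (1 - qpow absK (- of_nat CARD('n))) / (1 - qpow absK z)"
  proof -
    let ?A = "1 - qpow absK (- of_nat CARD('n))" and ?B = "1 - qpow absK (- (z + of_nat CARD('n)))"
    have "\<Phi> 0 * ?A + ?B * (S * J - \<Phi> 0 * J) = \<Phi> 0 * ?A + S * (?B * J) - \<Phi> 0 * (?B * J)"
      by (simp add: algebra_simps)
    also have "?B * J = ?A" unfolding J_def by (rule integral_Omega_normK_powr[OF z])
    finally show ?thesis by simp
  qed
  finally show ?thesis unfolding \<Phi>_def S_def .
qed

lemma igusa_pairing_Delta: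
  assumes hom: "hom_form d c" and L: "finite L" and s: "0 \<le> Re s"
  shows "igusa_pairing absK M (form_eval c) s (\<lambda>x. \<Sum>l\<in>L. a l * Omega absK l x) =
    (\<Sum>l\<in>L. a l * qpow absK (- of_int l * (of_nat d * s + of_nat CARD('n))))
      * igusa_zeta absK M (form_eval c) s"
proof -
  let ?F = "\<lambda>x. complex_of_real (absK (form_eval c x)) powr s"
  have "igusa_pairing absK M (form_eval c) s (\<lambda>x. \<Sum>l\<in>L. a l * Omega absK l x) =
      (\<integral>x. (\<Sum>l\<in>L. a l * Omega absK l x) * ?F x \<partial>M)"
    unfolding igusa_pairing_def set_lebesgue_integral_def
    by (intro Bochner_Integration.integral_cong) (auto simp: indicator_def)
  also have "\<dots> = (\<Sum>l\<in>L. a l * qpow absK (- of_int l * (of_nat d * s + of_nat CARD('n))))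
      * (\<integral>x. Omega absK 0 x * ?F x \<partial>M)"
    using absK_form_powr_smult[OF hom] absK_form_powr_bounded[OF s]
      borel_measurable_absK_lipschitz[OF lipschitz_on_kballs_form_eval]
    by (intro integral_Delta_homogeneous L) simp_all
  also have "(\<integral>x. Omega absK 0 x * ?F x \<partial>M) = igusa_zeta absK M (form_eval c) s"
    unfolding igusa_zeta_def set_lebesgue_integral_def
    by (intro Bochner_Integration.integral_cong) (auto simp: Omega_0_eq_indicator indicator_def)
  finally show ?thesis .
qed

end

theorem lemma2p3:
  fixes absK :: "'k::field_char_0 \<Rightarrow> real"
    and M :: "('k ^ 'n::finite) measure"
    and c :: "('n \<Rightarrow> nat) \<Rightarrow> 'k"
    and d :: nat
    and s :: complex
    and \<Phi> :: "'k ^ 'n \<Rightarrow> complex"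
  assumes "p_adic_field absK"
    and "haar_measure absK M"
    and "hom_form d c"
    and "0 < Re s"
    and "\<Phi> \<in> Delta_space absK"
  shows "igusa_pairing absK M (form_eval c) s \<Phi> =
         ((1 - qpow absK (of_nat d * s)) / (1 - qpow absK (- of_nat CARD('n))))
         * igusa_zeta absK M (form_eval c) s
         * riesz absK M (of_nat d * s + of_nat CARD('n)) \<Phi>"
proof -
  interpret p_adic_haar absK M
    using assms(1,2) by unfold_locales
  obtain L a where L: "finite L" and \<Phi>: "\<Phi> = (\<lambda>x. \<Sum>l\<in>L. a l * Omega absK l x)"
    using assms(5) unfolding Delta_space_def by blast
  define S where "S = (\<Sum>l\<in>L. a l * qpow absK (- of_int l * (of_nat d * s + of_nat CARD('n))))"
  have "Re (of_nat d * s) \<noteq> 0" "Re (- of_nat CARD('n)) \<noteq> 0"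
    using assms(3,4) unfolding hom_form_def by simp_all
  then have "1 - qpow absK (of_nat d * s) \<noteq> 0" "1 - qpow absK (- of_nat CARD('n)) \<noteq> 0"
    using qpow_neq_1 by (metis right_minus_eq)+
  moreover have "riesz absK M (of_nat d * s + of_nat CARD('n)) \<Phi> =
      S * (1 - qpow absK (- of_nat CARD('n))) / (1 - qpow absK (of_nat d * s))"
    unfolding \<Phi> S_def using assms(4) by (intro riesz_Delta L) simp
  moreover have "igusa_pairing absK M (form_eval c) s \<Phi> = S * igusa_zeta absK M (form_eval c) s"
    unfolding \<Phi> S_def using assms(4) by (intro igusa_pairing_Delta assms(3) L) simp
  ultimately show ?thesis by simp
qed

end
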